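(* Let $\varphi$ be an Orlicz $N$-function with Young–Fenchel transform $\psi$ and let $q_\varphi$ be the generalized inverse of the density of $\varphi$. Let $\{X_{k,n},k,n\ge1\}$ be a double array of independent $\varphi$-subgaussian random variables with $\tau_\varphi(X_{k,n})=1$ for all $k,n$, and set $Y_{m,j}=\max_{1\le k\le m,1\le n\le j}X_{k,n}-\psi^{-1}(\ln(mj))$, $Y^+_{m,j}=\max(Y_{m,j},0)$. Assume: (i) there is a strictly increasing function $\kappa:\mathbb R^+\to\mathbb R^+$ and a constant $C>0$ such that $P(X_{k,n}>x)\ge C\exp(-\kappa(x))$ for all $k,n\ge1$ and $x>0$; (ii) there exist $x_0>0$ and $B,C_1>0$ such that $\exp(-\kappa(x))\ge C_1\exp(-B\psi(x))$ for all $x\ge x_0$; (iii) for some $\varepsilon>0$, $\sup_{x>x_0}\frac{q_\varphi(x+\varepsilon)}{\psi(x)}\le C_2<+\infty$. Then for every $\alpha<2-B(1+C_2\varepsilon)$, $$\sum_{m=1}^\infty\sum_{j=1}^\infty(mj)^{-\alpha}P(Y^+_{m,j}>\varepsilon)=+\infty.$$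
   Context: An Orlicz $N$-function is a continuous even convex function $\varphi:\mathbb R\to\mathbb R$ with $\varphi(0)=0$, increasing on $(0,\infty)$, with $\varphi(x)/x\to0$ as $x\to0$ and $\varphi(x)/x\to+\infty$ as $x\to+\infty$. It can be written $\varphi(x)=\int_0^{|x|}p_\varphi(t)\,dt$ with non-decreasing density $p_\varphi$; its generalized inverse is $q_\varphi(t)=\sup\{u\ge0:p_\varphi(u)\le t\}$. The Young–Fenchel transform is $\psi(x)=\sup_{y\in\mathbb R}(xy-\varphi(y))$, with $\psi(x)=\int_0^{|x|}q_\varphi(t)dt$; $\psi^{-1}$ is the inverse of $\psi$ on $[0,\infty)$. A random variable $X$ is $\varphi$-subgaussian if $EX=0$ and there is a finite $a>0$ with $E\exp(tX)\le\exp(\varphi(at))$ for all $t$; $\tau_\varphi(X)=\inf\{a>0:E\exp(tX)\le\exp(\varphi(at))\ \forall t\}$. *)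

theory Defs
  imports "HOL-Probability.Probability"
begin

definition orlicz_N :: "(real \<Rightarrow> real) \<Rightarrow> bool" where
  "orlicz_N \<phi> \<longleftrightarrow>
     continuous_on UNIV \<phi> \<and> convex_on UNIV \<phi> \<and> (\<forall>x. \<phi> (-x) = \<phi> x) \<and> \<phi> 0 = 0 \<and>
     strict_mono_on {0<..} \<phi> \<and>
     ((\<lambda>x. \<phi> x / x) \<longlongrightarrow> 0) (at 0) \<and>
     filterlim (\<lambda>x. \<phi> x / x) at_top at_top"

definition is_orlicz_density :: "(real \<Rightarrow> real) \<Rightarrow> (real \<Rightarrow> real) \<Rightarrow> bool" where
  "is_orlicz_density \<phi> p \<longleftrightarrow>
     mono_on {0..} p \<and> (\<forall>x. p integrable_on {0..\<bar>x\<bar>} \<and> \<phi> x = integral {0..\<bar>x\<bar>} p)"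

definition gen_inv :: "(real \<Rightarrow> real) \<Rightarrow> real \<Rightarrow> real" where
  "gen_inv p t = Sup {u. u \<ge> 0 \<and> p u \<le> t}"

definition young_fenchel :: "(real \<Rightarrow> real) \<Rightarrow> real \<Rightarrow> real" where
  "young_fenchel \<phi> x = (SUP y. x * y - \<phi> y)"

definition inv_pos :: "(real \<Rightarrow> real) \<Rightarrow> real \<Rightarrow> real" where
  "inv_pos \<psi> v = (THE u. u \<ge> 0 \<and> \<psi> u = v)"

definition subg_bound :: "'a measure \<Rightarrow> (real \<Rightarrow> real) \<Rightarrow> ('a \<Rightarrow> real) \<Rightarrow> real \<Rightarrow> bool" where
  "subg_bound M \<phi> X a \<longleftrightarrow>
     (\<forall>t. integrable M (\<lambda>\<omega>. exp (t * X \<omega>)) \<and>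
          (\<integral>\<omega>. exp (t * X \<omega>) \<partial>M) \<le> exp (\<phi> (a * t)))"

definition phi_subgaussian :: "'a measure \<Rightarrow> (real \<Rightarrow> real) \<Rightarrow> ('a \<Rightarrow> real) \<Rightarrow> bool" where
  "phi_subgaussian M \<phi> X \<longleftrightarrow>
     integrable M X \<and> (\<integral>\<omega>. X \<omega> \<partial>M) = 0 \<and> (\<exists>a>0. subg_bound M \<phi> X a)"

definition tau_phi :: "'a measure \<Rightarrow> (real \<Rightarrow> real) \<Rightarrow> ('a \<Rightarrow> real) \<Rightarrow> real" where
  "tau_phi M \<phi> X = Inf {a. a > 0 \<and> subg_bound M \<phi> X a}"

end

theory Submission
  imports Defs
begin

(* A variable with tau_phi = 1 satisfies
   the Chernoff bound P(X > x) <= exp (- psi x); against the lower bound C C_1 exp (- B psi x)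
   given by (i) and (ii) this forces B >= 1.  Since psi' = q_phi, condition (iii) gives
   psi (u + eps) <= (1 + C_2 eps) psi u, so for u = psi^-1 (ln N) every X_{k,1} exceeds u + eps
   with probability at least c N^-s, where c = C C_1 and s = B (1 + C_2 eps) >= 1.  By
   independence the maximum of X_{1,1}, ..., X_{N,1} exceeds u + eps with probability at least
   1 - (1 - c N^-s)^N >= c / (1 + c) N^(1-s).  Hence the N-th term of that column is at least a
   constant times N^(1-s-alpha), and 1 - s - alpha > -1. *)

lemma orlicz_N_nonneg:
  assumes "orlicz_N \<phi>" shows "\<phi> x \<ge> 0"
proof -
  have "convex_on UNIV \<phi>" "\<phi> (-x) = \<phi> x" "\<phi> 0 = 0"
    using assms unfolding orlicz_N_def by auto
  moreover from this(1)
  have "\<phi> ((1 - 1/2) *\<^sub>R x + (1/2) *\<^sub>R (-x)) \<le> (1 - 1/2) * \<phi> x + (1/2) * \<phi> (-x)"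
    by (rule convex_onD) auto
  ultimately show ?thesis by simp
qed

lemma orlicz_N_abs_mono:
  assumes "orlicz_N \<phi>" "\<bar>x\<bar> \<le> \<bar>y\<bar>" shows "\<phi> x \<le> \<phi> y"
proof -
  have even: "\<phi> \<bar>z\<bar> = \<phi> z" for z
    using assms(1) unfolding orlicz_N_def by (cases "z \<ge> 0") auto
  have zero: "\<phi> 0 = 0" and mono: "strict_mono_on {0<..} \<phi>"
    using assms(1) unfolding orlicz_N_def by auto
  have "\<phi> \<bar>x\<bar> \<le> \<phi> \<bar>y\<bar>"
  proof (cases "x = 0 \<or> \<bar>x\<bar> = \<bar>y\<bar>")
    case True
    then show ?thesis using zero orlicz_N_nonneg[OF assms(1)] by auto
  next
    case False
    then show ?thesis using assms(2) by (intro less_imp_le strict_mono_onD[OF mono]) auto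
  qed
  then show ?thesis by (simp add: even)
qed

lemma bdd_above_fenchel_young:
  assumes "orlicz_N \<phi>" shows "bdd_above (range (\<lambda>y. x * y - \<phi> y))"
proof -
  have lim: "filterlim (\<lambda>y. \<phi> y / y) at_top at_top" and even: "\<And>y. \<phi> (-y) = \<phi> y"
    using assms unfolding orlicz_N_def by auto
  obtain R where R: "\<And>y. y \<ge> R \<Longrightarrow> \<bar>x\<bar> \<le> \<phi> y / y"
    using lim[unfolded filterlim_at_top, rule_format, of "\<bar>x\<bar>"]
    by (auto simp: eventually_at_top_linorder)
  define R' where "R' = max R 1"
  have "x * y - \<phi> y \<le> \<bar>x\<bar> * R'" for y
  proof (cases "\<bar>y\<bar> \<ge> R'")
    case True
    then have "\<bar>x\<bar> * \<bar>y\<bar> \<le> \<phi> \<bar>y\<bar>"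
      using R[of "\<bar>y\<bar>"] by (auto simp: R'_def field_simps)
    moreover have "\<phi> \<bar>y\<bar> = \<phi> y" using even by (cases "y \<ge> 0") auto
    moreover have "x * y \<le> \<bar>x\<bar> * \<bar>y\<bar>" "0 \<le> \<bar>x\<bar> * R'"
      by (auto simp: R'_def abs_mult[symmetric])
    ultimately show ?thesis by linarith
  next
    case False
    have "x * y \<le> \<bar>x\<bar> * \<bar>y\<bar>" by (metis abs_ge_self abs_mult)
    also have "\<dots> \<le> \<bar>x\<bar> * R'" using False by (intro mult_left_mono) auto
    finally show ?thesis using orlicz_N_nonneg[OF assms, of y] by linarith
  qed
  then show ?thesis by (intro bdd_aboveI2)
qed

lemma fenchel_young_inequality:
  assumes "orlicz_N \<phi>" shows "x * y - \<phi> y \<le> young_fenchel \<phi> x"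
  unfolding young_fenchel_def by (rule cSUP_upper[OF _ bdd_above_fenchel_young[OF assms]]) simp

lemma young_fenchel_least:
  assumes "\<And>y. x * y - \<phi> y \<le> K" shows "young_fenchel \<phi> x \<le> K"
  unfolding young_fenchel_def by (rule cSUP_least) (auto intro: assms)

lemma young_fenchel_0:
  assumes "orlicz_N \<phi>" shows "young_fenchel \<phi> 0 = 0"
proof (rule antisym)
  show "young_fenchel \<phi> 0 \<le> 0"
    by (rule young_fenchel_least) (simp add: orlicz_N_nonneg[OF assms])
  show "0 \<le> young_fenchel \<phi> 0"
    using fenchel_young_inequality[OF assms, of 0 0] assms by (simp add: orlicz_N_def)
qed

lemma young_fenchel_pos:
  assumes "orlicz_N \<phi>" "x > 0" shows "young_fenchel \<phi> x > 0"
proof -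
  have "((\<lambda>y. \<phi> y / y) \<longlongrightarrow> 0) (at_right 0)"
    using assms(1) filterlim_at_split unfolding orlicz_N_def by blast
  then have "eventually (\<lambda>y. \<phi> y / y < x) (at_right 0)"
    using assms(2) order_tendstoD(2) by blast
  then obtain b where b: "b > 0" "\<And>y. 0 < y \<Longrightarrow> y < b \<Longrightarrow> \<phi> y / y < x"
    by (auto simp: eventually_at_right_field)
  then have "\<phi> (b / 2) < x * (b / 2)" using b(2)[of "b / 2"] by (simp add: field_simps)
  then show ?thesis using fenchel_young_inequality[OF assms(1), of x "b / 2"] by linarith
qed

lemma young_fenchel_ge_linear:
  assumes "orlicz_N \<phi>" shows "x - \<phi> 1 \<le> young_fenchel \<phi> x"
  using fenchel_young_inequality[OF assms, of x 1] by simp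

lemma filterlim_young_fenchel_at_top:
  assumes "orlicz_N \<phi>" shows "filterlim (young_fenchel \<phi>) at_top at_top"
proof (rule filterlim_at_top_mono)
  show "filterlim (\<lambda>x. - \<phi> 1 + x) at_top at_top"
    by (rule filterlim_tendsto_add_at_top[OF tendsto_const filterlim_ident])
qed (use young_fenchel_ge_linear[OF assms] in simp)

lemma convex_on_young_fenchel:
  assumes "orlicz_N \<phi>" shows "convex_on UNIV (young_fenchel \<phi>)"
proof (rule convex_onI)
  fix t x z :: real assume t: "0 < t" "t < 1"
  show "young_fenchel \<phi> ((1 - t) *\<^sub>R x + t *\<^sub>R z)
      \<le> (1 - t) * young_fenchel \<phi> x + t * young_fenchel \<phi> z"
  proof (rule young_fenchel_least)
    fix y
    have "((1 - t) *\<^sub>R x + t *\<^sub>R z) * y - \<phi> y = (1 - t) * (x * y - \<phi> y) + t * (z * y - \<phi> y)"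
      by (simp add: algebra_simps)
    also have "\<dots> \<le> (1 - t) * young_fenchel \<phi> x + t * young_fenchel \<phi> z"
      using t fenchel_young_inequality[OF assms] by (intro add_mono mult_left_mono) auto
    finally show "((1 - t) *\<^sub>R x + t *\<^sub>R z) * y - \<phi> y \<le> \<dots>" .
  qed
qed simp

lemma continuous_on_young_fenchel:
  assumes "orlicz_N \<phi>" shows "continuous_on UNIV (young_fenchel \<phi>)"
  by (rule convex_on_continuous[OF _ convex_on_young_fenchel[OF assms]]) simp

lemma strict_mono_on_young_fenchel:
  assumes "orlicz_N \<phi>" shows "strict_mono_on {0..} (young_fenchel \<phi>)"
proof (rule strict_mono_onI)
  fix a b :: real assume "a \<in> {0..}" "b \<in> {0..}" "a < b"
  then have ab: "0 \<le> a / b" "a / b < 1" "b > 0" by auto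
  have "young_fenchel \<phi> ((1 - a / b) *\<^sub>R 0 + (a / b) *\<^sub>R b)
      \<le> (1 - a / b) * young_fenchel \<phi> 0 + (a / b) * young_fenchel \<phi> b"
    using ab by (intro convex_onD[OF convex_on_young_fenchel[OF assms]]) auto
  also have "\<dots> < 1 * young_fenchel \<phi> b"
    using ab young_fenchel_pos[OF assms ab(3)]
    by (simp add: young_fenchel_0[OF assms] del: times_divide_eq_left)
  finally show "young_fenchel \<phi> a < young_fenchel \<phi> b" using ab by simp
qed

lemma inv_pos_eqI:
  assumes "strict_mono_on {0..} f" "u \<ge> 0" "f u = v" shows "inv_pos f v = u"
  unfolding inv_pos_def
  by (rule the_equality) (use assms strict_mono_on_eqD in fastforce)+

lemma young_fenchel_inv_pos:
  assumes "orlicz_N \<phi>" "v \<ge> 0"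
  shows "inv_pos (young_fenchel \<phi>) v \<ge> 0" "young_fenchel \<phi> (inv_pos (young_fenchel \<phi>) v) = v"
proof -
  have "\<exists>u. 0 \<le> u \<and> u \<le> v + \<phi> 1 \<and> young_fenchel \<phi> u = v"
  proof (rule IVT')
    show "young_fenchel \<phi> 0 \<le> v" "v \<le> young_fenchel \<phi> (v + \<phi> 1)" "0 \<le> v + \<phi> 1"
      using assms young_fenchel_0[OF assms(1)] young_fenchel_ge_linear[OF assms(1), of "v + \<phi> 1"]
        orlicz_N_nonneg[OF assms(1), of 1] by auto
    show "continuous_on {0..v + \<phi> 1} (young_fenchel \<phi>)"
      using continuous_on_young_fenchel[OF assms(1)] by (rule continuous_on_subset) simp
  qed
  then obtain u where "0 \<le> u" "young_fenchel \<phi> u = v" by blast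
  then show "inv_pos (young_fenchel \<phi>) v \<ge> 0" "young_fenchel \<phi> (inv_pos (young_fenchel \<phi>) v) = v"
    using inv_pos_eqI[OF strict_mono_on_young_fenchel[OF assms(1)]] by auto
qed

lemma orlicz_density_diff:
  assumes "is_orlicz_density \<phi> p" "0 \<le> a" "a \<le> b"
  shows "p integrable_on {a..b}" "\<phi> b - \<phi> a = integral {a..b} p"
proof -
  have int: "p integrable_on {0..x}" and eq: "\<phi> x = integral {0..x} p" if "x \<ge> 0" for x
    using assms(1) that unfolding is_orlicz_density_def by (metis abs_of_nonneg)+
  show "p integrable_on {a..b}"
    by (rule integrable_on_subinterval[OF int[of b]]) (use assms in auto)
  have "integral {0..a} p + integral {a..b} p = integral {0..b} p"
    using Henstock_Kurzweil_Integration.integral_combine[OF assms(2,3) int[of b]] assms by simp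
  then show "\<phi> b - \<phi> a = integral {a..b} p"
    using eq[of a] eq[of b] assms by simp
qed

lemma orlicz_density_secant_bounds:
  assumes "is_orlicz_density \<phi> p" "0 \<le> a" "a \<le> b"
  shows "p a * (b - a) \<le> \<phi> b - \<phi> a" "\<phi> b - \<phi> a \<le> p b * (b - a)"
proof -
  have mono: "p a \<le> p t" "p t \<le> p b" if "t \<in> {a..b}" for t
    using assms that unfolding is_orlicz_density_def by (auto intro: mono_onD)
  show "p a * (b - a) \<le> \<phi> b - \<phi> a"
    using integral_le[OF integrable_const_ivl orlicz_density_diff(1)[OF assms] mono(1)]
      orlicz_density_diff(2)[OF assms] assms(3) by (simp add: mult.commute)
  show "\<phi> b - \<phi> a \<le> p b * (b - a)"
    using integral_le[OF orlicz_density_diff(1)[OF assms] integrable_const_ivl mono(2)]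
      orlicz_density_diff(2)[OF assms] assms(3) by (simp add: mult.commute)
qed

lemma orlicz_density_0_le:
  assumes "orlicz_N \<phi>" "is_orlicz_density \<phi> p" shows "p 0 \<le> 0"
proof -
  have lim: "((\<lambda>x. \<phi> x / x) \<longlongrightarrow> 0) (at_right 0)" and zero: "\<phi> 0 = 0"
    using assms(1) filterlim_at_split unfolding orlicz_N_def by blast+
  have "p 0 \<le> \<phi> x / x" if "x > 0" for x
    using orlicz_density_secant_bounds(1)[OF assms(2), of 0 x] that zero
    by (simp add: field_simps)
  then have "eventually (\<lambda>x. p 0 \<le> \<phi> x / x) (at_right 0)"
    by (auto simp: eventually_at_right_field intro: exI[of _ 1])
  then show ?thesis using tendsto_lowerbound[OF lim] by simp
qed

lemma orlicz_density_unbounded: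
  assumes "orlicz_N \<phi>" "is_orlicz_density \<phi> p" shows "\<exists>x>0. v < p x"
proof -
  have lim: "filterlim (\<lambda>x. \<phi> x / x) at_top at_top" and zero: "\<phi> 0 = 0"
    using assms(1) unfolding orlicz_N_def by auto
  obtain R where R: "\<And>x. x \<ge> R \<Longrightarrow> v + 1 \<le> \<phi> x / x"
    using lim[unfolded filterlim_at_top, rule_format, of "v + 1"]
    by (auto simp: eventually_at_top_linorder)
  define x where "x = max R 1"
  have "\<phi> x / x \<le> p x"
    using orlicz_density_secant_bounds(2)[OF assms(2), of 0 x] zero
    by (simp add: x_def field_simps)
  then show ?thesis using R[of x] by (intro exI[of _ x]) (auto simp: x_def)
qed

lemma
  assumes "orlicz_N \<phi>" "is_orlicz_density \<phi> p" "v \<ge> 0"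
  shows gen_inv_nonneg: "gen_inv p v \<ge> 0"
    and less_gen_inv_density: "\<And>t. gen_inv p v < t \<Longrightarrow> v < p t"
proof -
  let ?S = "{u. u \<ge> 0 \<and> p u \<le> v}"
  have zero: "0 \<in> ?S" using orlicz_density_0_le[OF assms(1,2)] assms(3) by auto
  obtain x where x: "x > 0" "v < p x" using orlicz_density_unbounded[OF assms(1,2)] by blast
  have "u \<le> x" if "u \<in> ?S" for u
  proof (rule ccontr)
    assume "\<not> u \<le> x"
    moreover have "mono_on {0..} p" using assms(2) unfolding is_orlicz_density_def by simp
    ultimately have "p x \<le> p u" using that x mono_onD[of "{0..}" p x u] by simp
    then show False using that x by auto
  qed
  then have bdd: "bdd_above ?S" by (intro bdd_aboveI[where M = x]) blast
  show "gen_inv p v \<ge> 0" unfolding gen_inv_def by (rule cSup_upper[OF zero bdd])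
  fix t assume t: "gen_inv p v < t"
  have "t \<notin> ?S"
  proof
    assume "t \<in> ?S"
    then have "t \<le> gen_inv p v" unfolding gen_inv_def by (rule cSup_upper[OF _ bdd])
    with t show False by simp
  qed
  moreover have "t \<ge> 0" using t \<open>gen_inv p v \<ge> 0\<close> by simp
  ultimately show "v < p t" by (simp add: not_le)
qed

lemma young_fenchel_increment:
  assumes "orlicz_N \<phi>" "is_orlicz_density \<phi> p" "v \<ge> 0" "u \<le> v"
  shows "young_fenchel \<phi> v \<le> young_fenchel \<phi> u + (v - u) * gen_inv p v"
proof -
  let ?\<psi> = "young_fenchel \<phi>" and ?q = "gen_inv p v"
  \<comment> \<open>Beyond any t > q v the density exceeds v, so y \<mapsto> v y - \<phi> y decreases there.\<close>
  have bound: "?\<psi> v \<le> ?\<psi> u + (v - u) * t" if t: "?q < t" for t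
  proof (rule young_fenchel_least)
    have below: "v * y - \<phi> y \<le> ?\<psi> u + (v - u) * t" if "y \<le> t" for y
    proof -
      have "v * y - \<phi> y = (u * y - \<phi> y) + (v - u) * y" by (simp add: algebra_simps)
      also have "\<dots> \<le> ?\<psi> u + (v - u) * t"
        using fenchel_young_inequality[OF assms(1), of u y] that assms(4)
        by (intro add_mono mult_left_mono) auto
      finally show ?thesis .
    qed
    fix y
    show "v * y - \<phi> y \<le> ?\<psi> u + (v - u) * t"
    proof (cases "y \<le> t")
      case False
      have "v * (y - t) \<le> p t * (y - t)"
        using False less_gen_inv_density[OF assms(1-3) t] by (intro mult_right_mono) auto
      also have "\<dots> \<le> \<phi> y - \<phi> t"
        using False t gen_inv_nonneg[OF assms(1-3)]
        by (intro orlicz_density_secant_bounds(1)[OF assms(2)]) auto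
      finally have "v * y - \<phi> y \<le> v * t - \<phi> t" by (simp add: algebra_simps)
      then show ?thesis using below[of t] by simp
    qed (rule below)
  qed
  show ?thesis
  proof (rule field_le_epsilon)
    fix e :: real assume "e > 0"
    then have "(v - u) * (e / (v - u + 1)) \<le> e"
      using assms(4) by (simp add: field_simps)
    then show "?\<psi> v \<le> ?\<psi> u + (v - u) * ?q + e"
      using bound[of "?q + e / (v - u + 1)"] \<open>e > 0\<close> assms(4)
      by (simp add: distrib_left)
  qed
qed

lemma subg_bound_tau_phi:
  assumes "orlicz_N \<phi>" "phi_subgaussian M \<phi> X"
  shows "subg_bound M \<phi> X (tau_phi M \<phi> X)"
proof -
  let ?A = "{a. a > 0 \<and> subg_bound M \<phi> X a}" and ?\<tau> = "tau_phi M \<phi> X"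
  have ne: "?A \<noteq> {}" using assms(2) unfolding phi_subgaussian_def by auto
  have bdd: "bdd_below ?A" by (intro bdd_belowI[where m = 0]) auto
  have cont: "isCont \<phi> x" for x
    using assms(1) unfolding orlicz_N_def by (simp add: continuous_on_eq_continuous_at)
  show ?thesis unfolding subg_bound_def
  proof (intro allI conjI)
    fix t
    show "integrable M (\<lambda>\<omega>. exp (t * X \<omega>))" using ne unfolding subg_bound_def by auto
    let ?E = "\<integral>\<omega>. exp (t * X \<omega>) \<partial>M" and ?f = "\<lambda>a. exp (\<phi> (a * t))"
    have "?E \<le> ?f b" if "?\<tau> < b" for b
    proof -
      obtain a where a: "a \<in> ?A" "a < b"
        using \<open>?\<tau> < b\<close> cInf_less_iff[OF ne bdd] unfolding tau_phi_def by auto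
      then have "?E \<le> ?f a" unfolding subg_bound_def by auto
      also have "\<dots> \<le> ?f b"
        using a by (simp add: orlicz_N_abs_mono[OF assms(1)] abs_mult mult_right_mono)
      finally show ?thesis .
    qed
    then have "eventually (\<lambda>b. ?E \<le> ?f b) (at_right ?\<tau>)"
      by (auto simp: eventually_at_right_field intro: exI[of _ "?\<tau> + 1"])
    moreover have "(?f \<longlongrightarrow> ?f ?\<tau>) (at_right ?\<tau>)"
      by (intro tendsto_intros isCont_tendsto_compose[OF cont] tendsto_ident_at)
    ultimately show "?E \<le> exp (\<phi> (?\<tau> * t))"
      by (intro tendsto_lowerbound[where F = "at_right ?\<tau>"]) auto
  qed
qed

lemma (in prob_space) tail_le_exp_neg_young_fenchel:
  assumes "orlicz_N \<phi>" "X \<in> borel_measurable M" "subg_bound M \<phi> X 1" "x \<ge> 0"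
  shows "prob {\<omega> \<in> space M. X \<omega> > x} \<le> exp (- young_fenchel \<phi> x)"
proof -
  let ?P = "prob {\<omega> \<in> space M. X \<omega> > x}"
  have "?P \<le> exp (\<phi> y - x * y)" for y
  proof (cases "y > 0")
    case True
    have int: "integrable M (\<lambda>\<omega>. exp (y * X \<omega>))"
      and mgf: "(\<integral>\<omega>. exp (y * X \<omega>) \<partial>M) \<le> exp (\<phi> y)"
      using assms(3) unfolding subg_bound_def by (auto dest: spec[of _ y])
    have "?P \<le> prob {\<omega> \<in> space M. exp (y * x) \<le> exp (y * X \<omega>)}"
      using True assms(2) by (intro finite_measure_mono) auto
    also have "\<dots> \<le> (\<integral>\<omega>. exp (y * X \<omega>) \<partial>M) / exp (y * x)"
      by (rule integral_Markov_inequality_measure[OF int]) auto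
    also have "\<dots> \<le> exp (\<phi> y) / exp (y * x)"
      by (rule divide_right_mono[OF mgf]) simp
    finally show ?thesis by (simp add: exp_diff mult.commute)
  next
    case False
    then have "x * y \<le> 0" using assms(4) by (simp add: mult_nonneg_nonpos)
    then have "1 \<le> exp (\<phi> y - x * y)" using orlicz_N_nonneg[OF assms(1), of y] by simp
    then show ?thesis by (meson order_trans prob_le_1)
  qed
  show ?thesis
  proof (cases "?P = 0")
    case False
    then have "?P > 0" using measure_nonneg[of M] by (simp add: order_less_le)
    have ln_P: "ln ?P \<le> \<phi> y - x * y" for y
      using \<open>?P > 0\<close> \<open>?P \<le> exp (\<phi> y - x * y)\<close> by (metis ln_exp ln_le_cancel_iff exp_gt_zero)
    have "x * y - \<phi> y \<le> - ln ?P" for y using ln_P[of y] by linarith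
    then have "young_fenchel \<phi> x \<le> - ln ?P" by (rule young_fenchel_least)
    then have "exp (ln ?P) \<le> exp (- young_fenchel \<phi> x)" by simp
    then show ?thesis using \<open>?P > 0\<close> by simp
  qed simp
qed

lemma (in prob_space) tail_exponent_ge_1:
  assumes "orlicz_N \<phi>" "X \<in> borel_measurable M" "phi_subgaussian M \<phi> X" "tau_phi M \<phi> X = 1"
    and "c > 0"
    and tail: "\<And>x. x \<ge> x\<^sub>0 \<Longrightarrow> c * exp (- B * young_fenchel \<phi> x) \<le> prob {\<omega> \<in> space M. X \<omega> > x}"
  shows "B \<ge> 1"
proof (rule ccontr)
  assume "\<not> B \<ge> 1"
  let ?\<psi> = "young_fenchel \<phi>"
  have "eventually (\<lambda>x. - ln c / (1 - B) < ?\<psi> x) at_top"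
    using filterlim_young_fenchel_at_top[OF assms(1)] by (simp add: filterlim_at_top_dense)
  then obtain N where N: "\<And>x. x \<ge> N \<Longrightarrow> - ln c / (1 - B) < ?\<psi> x"
    by (auto simp: eventually_at_top_linorder)
  define x where "x = max N (max x\<^sub>0 0)"
  then have x: "x \<ge> N" "x \<ge> x\<^sub>0" "x \<ge> 0" by auto
  have "subg_bound M \<phi> X 1" using subg_bound_tau_phi[OF assms(1,3)] assms(4) by simp
  then have "c * exp (- B * ?\<psi> x) \<le> exp (- ?\<psi> x)"
    using order_trans[OF tail[OF x(2)] tail_le_exp_neg_young_fenchel[OF assms(1,2) _ x(3)]] by simp
  then have "ln (c * exp (- B * ?\<psi> x)) \<le> - ?\<psi> x"
    using \<open>c > 0\<close> ln_le_cancel_iff[of "c * exp (- B * ?\<psi> x)" "exp (- ?\<psi> x)"] by simp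
  then have "ln c - B * ?\<psi> x \<le> - ?\<psi> x" using \<open>c > 0\<close> by (simp add: ln_mult)
  moreover have "- ln c < (1 - B) * ?\<psi> x" using N[OF x(1)] \<open>\<not> B \<ge> 1\<close> by (simp add: field_simps)
  ultimately show False by (simp add: algebra_simps)
qed

lemma (in prob_space) prob_exists_gt_indep_vars:
  fixes Y :: "'i \<Rightarrow> 'a \<Rightarrow> real"
  assumes indep: "indep_vars (\<lambda>_. borel) Y I" and J: "J \<subseteq> I" "finite J" "J \<noteq> {}"
    and tail: "\<And>j. j \<in> J \<Longrightarrow> q \<le> prob {\<omega> \<in> space M. w < Y j \<omega>}"
  shows "1 - (1 - q) ^ card J \<le> prob {\<omega> \<in> space M. \<exists>j\<in>J. w < Y j \<omega>}"
proof -
  let ?below = "\<lambda>j. Y j -` {..w} \<inter> space M"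
  have meas: "Y j \<in> borel_measurable M" if "j \<in> J" for j
    using indep J that unfolding indep_vars_def by auto
  have below: "prob (?below j) \<le> 1 - q" if "j \<in> J" for j
  proof -
    have "?below j = space M - {\<omega> \<in> space M. w < Y j \<omega>}" by auto
    then show ?thesis using prob_compl[of "{\<omega> \<in> space M. w < Y j \<omega>}"] tail[OF that] meas[OF that]
      by simp
  qed
  have "prob (\<Inter>j\<in>J. ?below j) = (\<Prod>j\<in>J. prob (?below j))"
    using indep_varsD[OF indep J(3,2,1)] by simp
  also have "\<dots> \<le> (\<Prod>j\<in>J. 1 - q)" using below by (intro prod_mono) auto
  finally have "prob (\<Inter>j\<in>J. ?below j) \<le> (1 - q) ^ card J" by simp
  moreover have "{\<omega> \<in> space M. \<exists>j\<in>J. w < Y j \<omega>} = space M - (\<Inter>j\<in>J. ?below j)"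
    using J(3) by (auto simp: not_le)
  moreover have "(\<Inter>j\<in>J. ?below j) \<in> events"
    using meas J by (intro sets.finite_INT) (auto intro: measurable_sets)
  ultimately show ?thesis by (simp add: prob_compl)
qed

lemma one_minus_power_ge:
  fixes q :: real assumes "0 \<le> q" "q \<le> 1"
  shows "q * n / (1 + q * n) \<le> 1 - (1 - q) ^ n"
proof -
  have qn: "0 \<le> q * n" using assms by simp
  have "(1 - q) ^ n \<le> exp (- q) ^ n"
    using assms exp_ge_add_one_self[of "- q"] by (intro power_mono) auto
  also have "\<dots> = inverse (exp (q * n))"
    by (metis exp_minus exp_of_nat_mult mult.commute mult_minus_right)
  also have "\<dots> \<le> inverse (1 + q * n)"
    using qn by (intro le_imp_inverse_le exp_ge_add_one_self) simp
  also have "\<dots> = 1 - q * n / (1 + q * n)"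
    using qn by (simp add: field_simps)
  finally show ?thesis by simp
qed

lemma young_fenchel_inv_pos_add_le:
  assumes \<phi>: "orlicz_N \<phi>" "is_orlicz_density \<phi> p"
    and shift: "\<And>x. x > x\<^sub>0 \<Longrightarrow> gen_inv p (x + \<epsilon>) / young_fenchel \<phi> x \<le> C\<^sub>2"
    and "x\<^sub>0 \<ge> 0" "\<epsilon> > 0" and large: "young_fenchel \<phi> x\<^sub>0 < L"
  defines "u \<equiv> inv_pos (young_fenchel \<phi>) L"
  shows "x\<^sub>0 < u" "C\<^sub>2 \<ge> 0" "young_fenchel \<phi> (u + \<epsilon>) \<le> (1 + C\<^sub>2 * \<epsilon>) * L"
proof -
  let ?\<psi> = "young_fenchel \<phi>"
  have mono: "strict_mono_on {0..} ?\<psi>" by (rule strict_mono_on_young_fenchel[OF \<phi>(1)])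
  have "0 \<le> ?\<psi> x\<^sub>0"
    using strict_mono_on_leD[OF mono, of 0 x\<^sub>0] \<open>x\<^sub>0 \<ge> 0\<close> young_fenchel_0[OF \<phi>(1)] by simp
  then have u: "u \<ge> 0" "?\<psi> u = L" using young_fenchel_inv_pos[OF \<phi>(1)] large by (auto simp: u_def)
  show "x\<^sub>0 < u"
  proof (rule ccontr)
    assume "\<not> x\<^sub>0 < u"
    then have "?\<psi> u \<le> ?\<psi> x\<^sub>0" using strict_mono_on_leD[OF mono] u(1) by simp
    then show False using large u(2) by simp
  qed
  then have ratio: "gen_inv p (u + \<epsilon>) / ?\<psi> u \<le> C\<^sub>2" and "u > 0"
    using shift \<open>x\<^sub>0 \<ge> 0\<close> by auto
  have "0 \<le> gen_inv p (u + \<epsilon>)" using gen_inv_nonneg[OF \<phi>] \<open>\<epsilon> > 0\<close> u(1) by simp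
  moreover have "?\<psi> u > 0" using young_fenchel_pos[OF \<phi>(1) \<open>u > 0\<close>] .
  ultimately show "C\<^sub>2 \<ge> 0" using ratio by (meson divide_nonneg_pos order_trans)
  have "gen_inv p (u + \<epsilon>) \<le> C\<^sub>2 * L" using ratio \<open>?\<psi> u > 0\<close> u(2) by (simp add: pos_divide_le_eq)
  have "?\<psi> (u + \<epsilon>) \<le> L + \<epsilon> * gen_inv p (u + \<epsilon>)"
    using young_fenchel_increment[OF \<phi>, of "u + \<epsilon>" u] u \<open>\<epsilon> > 0\<close> by simp
  also have "\<dots> \<le> L + \<epsilon> * (C\<^sub>2 * L)"
    using \<open>gen_inv p (u + \<epsilon>) \<le> C\<^sub>2 * L\<close> \<open>\<epsilon> > 0\<close> by simp
  finally show "?\<psi> (u + \<epsilon>) \<le> (1 + C\<^sub>2 * \<epsilon>) * L" by (simp add: algebra_simps)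
qed

lemma suminf_ennreal_powr_weighted_eq_top:
  fixes g :: "nat \<Rightarrow> real"
  assumes "\<And>m. g m \<ge> 0" "K > 0" "\<beta> - \<alpha> \<ge> -1"
    and "eventually (\<lambda>m. K * real (Suc m) powr \<beta> \<le> g m) sequentially"
  shows "(\<Sum>m. ennreal (real (Suc m) powr (- \<alpha>) * g m)) = \<top>"
proof (rule ccontr)
  assume "(\<Sum>m. ennreal (real (Suc m) powr (- \<alpha>) * g m)) \<noteq> \<top>"
  then have "summable (\<lambda>m. real (Suc m) powr (- \<alpha>) * g m)"
    by (rule summable_suminf_not_top[rotated]) (simp add: assms(1))
  have "eventually (\<lambda>m. norm (K * real (Suc m) powr (\<beta> - \<alpha>))
      \<le> real (Suc m) powr (- \<alpha>) * g m) sequentially"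
    using assms(4)
  proof eventually_elim
    case (elim m)
    have "K * real (Suc m) powr (\<beta> - \<alpha>) = real (Suc m) powr (- \<alpha>) * (K * real (Suc m) powr \<beta>)"
      by (simp add: powr_diff powr_minus divide_inverse mult_ac)
    also have "\<dots> \<le> real (Suc m) powr (- \<alpha>) * g m" using elim by (intro mult_left_mono) auto
    finally show ?case using assms(2) by simp
  qed
  then have "summable (\<lambda>m. K * real (Suc m) powr (\<beta> - \<alpha>))"
    using \<open>summable (\<lambda>m. real (Suc m) powr (- \<alpha>) * g m)\<close> by (rule summable_comparison_test_ev)
  then have "summable (\<lambda>m. real m powr (\<beta> - \<alpha>))"
    using assms(2) summable_Suc_iff[of "\<lambda>m. real m powr (\<beta> - \<alpha>)"] by simp
  then show False using summable_real_powr_iff assms(3) by simp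
qed

lemma suminf_column_le_suminf_suminf:
  fixes f :: "nat \<Rightarrow> nat \<Rightarrow> ennreal"
  shows "(\<Sum>m. f m j) \<le> (\<Sum>m. \<Sum>i. f m i)"
  by (rule suminf_le[OF _ summableI summableI]) (use sum_le_suminf[OF summableI, of "{j}"] in simp)

lemma (in prob_space) prob_exists_gt_indep_vars_powr:
  fixes Y :: "'i \<Rightarrow> 'a \<Rightarrow> real"
  assumes indep: "indep_vars (\<lambda>_. borel) Y I" and J: "J \<subseteq> I" "finite J" "J \<noteq> {}"
    and "c > 0" "s \<ge> 1"
    and tail: "\<And>j. j \<in> J \<Longrightarrow> c * card J powr (- s) \<le> prob {\<omega> \<in> space M. w < Y j \<omega>}"
  shows "c / (1 + c) * card J powr (1 - s) \<le> prob {\<omega> \<in> space M. \<exists>j\<in>J. w < Y j \<omega>}"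
proof -
  define N where "N = real (card J)"
  define q where "q = c * N powr (- s)"
  have N: "N \<ge> 1" using J by (simp add: N_def Suc_le_eq card_gt_0_iff)
  obtain j where "j \<in> J" using J(3) by blast
  have q: "0 \<le> q" "q \<le> 1"
    using tail[OF \<open>j \<in> J\<close>] prob_le_1 \<open>c > 0\<close> by (auto simp: q_def N_def intro: order_trans)
  have qN: "q * N = c * N powr (1 - s)" using N by (simp add: q_def powr_diff powr_minus field_simps)
  have "N powr (1 - s) \<le> 1" using powr_mono[of "1 - s" 0 N] N \<open>s \<ge> 1\<close> by simp
  then have "q * N \<le> c" using qN \<open>c > 0\<close> by (simp add: mult_left_le)
  moreover have "0 \<le> q * N" using q N by simp
  ultimately have "q * N / (1 + c) \<le> q * N / (1 + q * N)" by (intro divide_left_mono) auto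
  then have "c / (1 + c) * N powr (1 - s) \<le> q * N / (1 + q * N)" by (simp add: qN)
  also have "\<dots> \<le> 1 - (1 - q) ^ card J" using one_minus_power_ge[OF q] by (simp add: N_def)
  also have "\<dots> \<le> prob {\<omega> \<in> space M. \<exists>j\<in>J. w < Y j \<omega>}"
    by (rule prob_exists_gt_indep_vars[OF indep J]) (use tail in \<open>simp add: q_def N_def\<close>)
  finally show ?thesis by (simp add: N_def)
qed

lemma (in prob_space) prob_Max_gt_shifted_inv_young_fenchel:
  fixes Y :: "'i \<Rightarrow> 'a \<Rightarrow> real"
  assumes \<phi>: "orlicz_N \<phi>" "is_orlicz_density \<phi> p"
    and indep: "indep_vars (\<lambda>_. borel) Y I" and J: "J \<subseteq> I" "finite J" "J \<noteq> {}"
    and tail: "\<And>j x. j \<in> J \<Longrightarrow> x \<ge> x\<^sub>0 \<Longrightarrow>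
      c * exp (- B * young_fenchel \<phi> x) \<le> prob {\<omega> \<in> space M. x < Y j \<omega>}"
    and shift: "\<And>x. x > x\<^sub>0 \<Longrightarrow> gen_inv p (x + \<epsilon>) / young_fenchel \<phi> x \<le> C\<^sub>2"
    and "x\<^sub>0 \<ge> 0" "c > 0" "B \<ge> 1" "\<epsilon> > 0"
    and large: "young_fenchel \<phi> x\<^sub>0 < ln (card J)"
  shows "c / (1 + c) * card J powr (1 - B * (1 + C\<^sub>2 * \<epsilon>)) \<le> prob {\<omega> \<in> space M.
    \<epsilon> < max (Max ((\<lambda>j. Y j \<omega>) ` J) - inv_pos (young_fenchel \<phi>) (ln (card J))) 0}"
proof -
  define N where "N = real (card J)"
  define u where "u = inv_pos (young_fenchel \<phi>) (ln N)"
  define s where "s = B * (1 + C\<^sub>2 * \<epsilon>)"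
  note quantile = young_fenchel_inv_pos_add_le[OF \<phi> shift \<open>x\<^sub>0 \<ge> 0\<close> \<open>\<epsilon> > 0\<close> large,
      folded N_def, folded u_def]
  have "1 * 1 \<le> s" unfolding s_def using quantile(2) \<open>B \<ge> 1\<close> \<open>\<epsilon> > 0\<close> by (intro mult_mono) auto
  have tail_u: "c * N powr (- s) \<le> prob {\<omega> \<in> space M. u + \<epsilon> < Y j \<omega>}" if "j \<in> J" for j
  proof -
    have "B * young_fenchel \<phi> (u + \<epsilon>) \<le> s * ln N"
      using mult_left_mono[OF quantile(3), of B] \<open>B \<ge> 1\<close> by (simp add: s_def mult.assoc)
    then have "c * N powr (- s) \<le> c * exp (- B * young_fenchel \<phi> (u + \<epsilon>))"
      using J \<open>c > 0\<close> by (simp add: N_def powr_def card_gt_0_iff)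
    also have "\<dots> \<le> prob {\<omega> \<in> space M. u + \<epsilon> < Y j \<omega>}"
      using tail[OF that] quantile(1) \<open>\<epsilon> > 0\<close> by simp
    finally show ?thesis .
  qed
  have "(\<exists>j\<in>J. u + \<epsilon> < Y j \<omega>) \<longleftrightarrow> \<epsilon> < max (Max ((\<lambda>j. Y j \<omega>) ` J) - u) 0" for \<omega>
    using Max_gr_iff[of "(\<lambda>j. Y j \<omega>) ` J" "u + \<epsilon>"] J \<open>\<epsilon> > 0\<close> by auto
  then show ?thesis
    using prob_exists_gt_indep_vars_powr[OF indep J \<open>c > 0\<close> _ tail_u[unfolded N_def]] \<open>1 * 1 \<le> s\<close>
    by (simp add: N_def u_def s_def)
qed

theorem theorem5:
  fixes M :: "'a measure" and \<phi> p :: "real \<Rightarrow> real"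
    and X :: "nat \<Rightarrow> nat \<Rightarrow> 'a \<Rightarrow> real"
    and \<kappa> :: "real \<Rightarrow> real"
    and C x\<^sub>0 B C\<^sub>1 C\<^sub>2 \<epsilon> \<alpha> :: real
  assumes "prob_space M"
    and "orlicz_N \<phi>"
    and "is_orlicz_density \<phi> p"
    and meas: "\<And>k n. k \<ge> 1 \<Longrightarrow> n \<ge> 1 \<Longrightarrow> X k n \<in> borel_measurable M"
    and indep: "prob_space.indep_vars M (\<lambda>_. borel) (\<lambda>(k, n). X k n) ({1..} \<times> {1..})"
    and subg: "\<And>k n. k \<ge> 1 \<Longrightarrow> n \<ge> 1 \<Longrightarrow> phi_subgaussian M \<phi> (X k n)"
    and tau: "\<And>k n. k \<ge> 1 \<Longrightarrow> n \<ge> 1 \<Longrightarrow> tau_phi M \<phi> (X k n) = 1"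
    and kappa_mono: "strict_mono_on {0<..} \<kappa>"
    and kappa_pos: "\<And>x. x > 0 \<Longrightarrow> \<kappa> x \<ge> 0"
    and "C > 0"
    and cond_i: "\<And>k n x. k \<ge> 1 \<Longrightarrow> n \<ge> 1 \<Longrightarrow> x > 0 \<Longrightarrow>
          measure M {\<omega> \<in> space M. X k n \<omega> > x} \<ge> C * exp (- \<kappa> x)"
    and "x\<^sub>0 > 0" and "B > 0" and "C\<^sub>1 > 0"
    and cond_ii: "\<And>x. x \<ge> x\<^sub>0 \<Longrightarrow>
          exp (- \<kappa> x) \<ge> C\<^sub>1 * exp (- B * young_fenchel \<phi> x)"
    and "\<epsilon> > 0"
    and cond_iii: "\<And>x. x > x\<^sub>0 \<Longrightarrow> gen_inv p (x + \<epsilon>) / young_fenchel \<phi> x \<le> C\<^sub>2"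
    and alpha: "\<alpha> < 2 - B * (1 + C\<^sub>2 * \<epsilon>)"
  shows "(\<Sum>m. \<Sum>j. ennreal ((real (Suc m) * real (Suc j)) powr (- \<alpha>) *
            measure M {\<omega> \<in> space M.
               max ((MAX (k, n) \<in> {1..Suc m} \<times> {1..Suc j}. X k n \<omega>)
                     - inv_pos (young_fenchel \<phi>) (ln (real (Suc m) * real (Suc j)))) 0 > \<epsilon>}))
         = \<top>"
proof -
  interpret prob_space M by fact
  let ?\<psi> = "young_fenchel \<phi>"
  let ?E = "\<lambda>m j. {\<omega> \<in> space M. max ((MAX (k, n) \<in> {1..Suc m} \<times> {1..Suc j}. X k n \<omega>)
    - inv_pos ?\<psi> (ln (real (Suc m) * real (Suc j)))) 0 > \<epsilon>}"
  let ?F = "\<lambda>m j. ennreal ((real (Suc m) * real (Suc j)) powr (- \<alpha>) * prob (?E m j))"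
  have tail: "C * C\<^sub>1 * exp (- B * ?\<psi> x) \<le> prob {\<omega> \<in> space M. x < X k n \<omega>}"
    if "k \<ge> 1" "n \<ge> 1" "x \<ge> x\<^sub>0" for k n x
  proof -
    have "C * (C\<^sub>1 * exp (- B * ?\<psi> x)) \<le> C * exp (- \<kappa> x)"
      using cond_ii[OF that(3)] \<open>C > 0\<close> by simp
    also have "\<dots> \<le> prob {\<omega> \<in> space M. x < X k n \<omega>}"
      using cond_i[OF that(1,2)] that(3) \<open>x\<^sub>0 > 0\<close> by simp
    finally show ?thesis by (simp add: mult.assoc)
  qed
  have "B \<ge> 1"
    using tail_exponent_ge_1[OF \<open>orlicz_N \<phi>\<close> meas subg tau, of 1 1 "C * C\<^sub>1" x\<^sub>0] tail[of 1 1]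
      \<open>C > 0\<close> \<open>C\<^sub>1 > 0\<close> by simp
  have "eventually (\<lambda>m. ?\<psi> x\<^sub>0 < ln (Suc m)) sequentially"
    using filterlim_compose[OF ln_at_top filterlim_compose[OF filterlim_real_sequentially filterlim_Suc]]
    by (simp add: filterlim_at_top_dense o_def)
  then have "eventually (\<lambda>m. C * C\<^sub>1 / (1 + C * C\<^sub>1) * real (Suc m) powr (1 - B * (1 + C\<^sub>2 * \<epsilon>))
      \<le> prob (?E m 0)) sequentially"
  proof eventually_elim
    case (elim m)
    have "{1..Suc m} \<times> {1..Suc 0} \<subseteq> {1..} \<times> {1..}" by auto
    then show ?case
      using prob_Max_gt_shifted_inv_young_fenchel[OF \<open>orlicz_N \<phi>\<close> \<open>is_orlicz_density \<phi> p\<close> indep,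
          of "{1..Suc m} \<times> {1..Suc 0}" x\<^sub>0 "C * C\<^sub>1" B \<epsilon> C\<^sub>2] tail cond_iii elim
        \<open>x\<^sub>0 > 0\<close> \<open>C > 0\<close> \<open>C\<^sub>1 > 0\<close> \<open>B \<ge> 1\<close> \<open>\<epsilon> > 0\<close>
      by (auto simp: split_beta')
  qed
  then have "(\<Sum>m. ennreal (real (Suc m) powr (- \<alpha>) * prob (?E m 0))) = \<top>"
    by (rule suminf_ennreal_powr_weighted_eq_top[rotated 3])
      (use alpha \<open>C > 0\<close> \<open>C\<^sub>1 > 0\<close> in \<open>auto intro!: divide_pos_pos add_pos_pos mult_pos_pos\<close>)
  then have "\<top> = (\<Sum>m. ?F m 0)" by (simp only: One_nat_def[symmetric] of_nat_1 mult_1_right)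
  also have "\<dots> \<le> (\<Sum>m. \<Sum>j. ?F m j)" by (rule suminf_column_le_suminf_suminf)
  finally show ?thesis by (rule top_unique[THEN iffD1])
qed

end
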